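(* Fix $k\ge1$. For every $k$-bounded composition $\alpha$, $\chi(\mathbf{S}^{(k)}_\alpha)=s^{(k)}_{\lambda(\alpha)}$.
   Context: Compositions are finite sequences of positive integers (possibly empty $\emptyset$); $k$-bounded means all parts $\le k$; $\lambda(\alpha)$ is the partition obtained by sorting the parts of $\alpha$ decreasingly. $\mathsf{NSym}=\mathbb{Q}\langle H_1,H_2,\dots\rangle$ (noncommuting), $\mathsf{NSym}_{(k)}$ its subalgebra generated by $H_1,\dots,H_k$. $\chi:\mathsf{NSym}\to\mathsf{Sym}$ is the algebra homomorphism with $H_i\mapsto h_i$ (complete homogeneous symmetric function), so $\chi(H_{\alpha_1}\cdots H_{\alpha_m})=h_{\lambda(\alpha)}$. $k$-conjugation: hook length of cell $(i,j)$ of $\kappa$ is $\kappa_i-j+\kappa'_j-i+1$; a $(k+1)$-core has no cell of hook length $k+1$; $p(\kappa)$ has $i$-th part the number of cells in row $i$ with hook length $\le k$; $p$ is a bijection from $(k+1)$-cores to $k$-bounded partitions with inverse $c$; $\lambda^{\omega_k}=p(c(\lambda)')$. For $k$-bounded partitions $\mu\subseteq\lambda$, $\lambda/\mu$ is a horizontal $k$-strip if no two of its cells share a column, and $\mu^{\omega_k}\subseteq\lambda^{\omega_k}$ with no two cells of $\lambda^{\omega_k}/\mu^{\omega_k}$ in the same row; its size is $|\lambda|-|\mu|$. The $k$-Schur functions $\{s^{(k)}_\lambda\}_{\lambda\ k\text{-bounded}}$ are the basis of $\mathsf{Sym}_{(k)}=\mathbb{Q}[h_1,\dots,h_k]$ with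 $s^{(k)}_\emptyset=1$ and $h_i s^{(k)}_\lambda=\sum_\mu s^{(k)}_\mu$ for $1\le i\le k$, summed over $k$-bounded $\mu$ with $\mu/\lambda$ a horizontal $k$-strip of size $i$. Box-adding operators: $t_1(\alpha)=[1,\alpha_1,\dots,\alpha_m]$; for $i\ge2$, $t_i(\alpha)$ replaces the leftmost part of $\alpha$ equal to $i-1$ by $i$ (undefined if none). $\beta//\alpha$ is a horizontal composition strip of size $n$ if $\beta=t_{i_n}\cdots t_{i_1}(\alpha)$ with $1\le i_1<\cdots<i_n$; for $k$-bounded $\alpha,\beta$ it is a horizontal $k$-composition strip if moreover $\lambda(\beta)/\lambda(\alpha)$ is a horizontal $k$-strip. $\{\mathbf{S}^{(k)}_\alpha\}$ is the unique basis of $\mathsf{NSym}_{(k)}$ with $\mathbf{S}^{(k)}_\emptyset=1$ and $H_i\mathbf{S}^{(k)}_\alpha=\sum_\beta\mathbf{S}^{(k)}_\beta$ ($1\le i\le k$) over $\beta$ with $\beta//\alpha$ a horizontal $k$-composition strip of size $i$. *)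

theory Defs
  imports Complex_Main "HOL-Library.Multiset" "HOL-Library.Function_Algebras"
begin

definition is_composition :: "nat list \<Rightarrow> bool" where
  "is_composition \<alpha> \<longleftrightarrow> (\<forall>x\<in>set \<alpha>. 0 < x)"

definition kcomp :: "nat \<Rightarrow> nat list \<Rightarrow> bool" where
  "kcomp k \<alpha> \<longleftrightarrow> (\<forall>x\<in>set \<alpha>. 0 < x \<and> x \<le> k)"

definition is_partition :: "nat list \<Rightarrow> bool" where
  "is_partition \<kappa> \<longleftrightarrow> sorted_wrt (\<ge>) \<kappa> \<and> (\<forall>x\<in>set \<kappa>. 0 < x)"

definition kpart :: "nat \<Rightarrow> nat list \<Rightarrow> bool" where
  "kpart k la \<longleftrightarrow> is_partition la \<and> (\<forall>x\<in>set la. x \<le> k)"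

definition lam :: "nat list \<Rightarrow> nat list" where
  "lam \<alpha> = rev (sort \<alpha>)"

text \<open>Cells (i,j), 1-indexed: row i has kappa_i = kappa!(i-1) cells.\<close>
definition cells :: "nat list \<Rightarrow> (nat \<times> nat) set" where
  "cells \<kappa> = {(i,j). 1 \<le> i \<and> i \<le> length \<kappa> \<and> 1 \<le> j \<and> j \<le> \<kappa> ! (i - 1)}"

definition colLen :: "nat list \<Rightarrow> nat \<Rightarrow> nat" where
  "colLen \<kappa> j = length (filter (\<lambda>x. j \<le> x) \<kappa>)"

definition conj :: "nat list \<Rightarrow> nat list" where
  "conj \<kappa> = map (colLen \<kappa>) [1..<Suc (foldr max \<kappa> 0)]"

definition hook :: "nat list \<Rightarrow> nat \<Rightarrow> nat \<Rightarrow> nat" where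
  "hook \<kappa> i j = (\<kappa> ! (i - 1) - j) + (colLen \<kappa> j - i) + 1"

definition is_core :: "nat \<Rightarrow> nat list \<Rightarrow> bool" where
  "is_core k \<kappa> \<longleftrightarrow> is_partition \<kappa> \<and> (\<forall>(i,j)\<in>cells \<kappa>. hook \<kappa> i j \<noteq> k + 1)"

definition pk :: "nat \<Rightarrow> nat list \<Rightarrow> nat list" where
  "pk k \<kappa> = map (\<lambda>i. card {j. (i,j) \<in> cells \<kappa> \<and> hook \<kappa> i j \<le> k}) [1..<Suc (length \<kappa>)]"

definition ck :: "nat \<Rightarrow> nat list \<Rightarrow> nat list" where
  "ck k la = (THE \<kappa>. is_core k \<kappa> \<and> pk k \<kappa> = la)"

definition omega :: "nat \<Rightarrow> nat list \<Rightarrow> nat list" where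
  "omega k la = pk k (conj (ck k la))"

definition hkstrip :: "nat \<Rightarrow> nat list \<Rightarrow> nat list \<Rightarrow> bool" where
  "hkstrip k la \<mu> \<longleftrightarrow> kpart k la \<and> kpart k \<mu> \<and> cells \<mu> \<subseteq> cells la \<and>
     (\<forall>c\<in>cells la - cells \<mu>. \<forall>d\<in>cells la - cells \<mu>. snd c = snd d \<longrightarrow> c = d) \<and>
     cells (omega k \<mu>) \<subseteq> cells (omega k la) \<and>
     (\<forall>c\<in>cells (omega k la) - cells (omega k \<mu>). \<forall>d\<in>cells (omega k la) - cells (omega k \<mu>).
        fst c = fst d \<longrightarrow> c = d)"

fun replace_first :: "nat \<Rightarrow> nat \<Rightarrow> nat list \<Rightarrow> nat list option" where
  "replace_first a b [] = None"
| "replace_first a b (x # xs) =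
     (if x = a then Some (b # xs) else map_option ((#) x) (replace_first a b xs))"

definition tbox :: "nat \<Rightarrow> nat list \<Rightarrow> nat list option" where
  "tbox i \<alpha> = (if i = 1 then Some (1 # \<alpha>)
               else if 2 \<le> i then replace_first (i - 1) i \<alpha> else None)"

fun apply_ts :: "nat list \<Rightarrow> nat list \<Rightarrow> nat list option" where
  "apply_ts [] \<alpha> = Some \<alpha>"
| "apply_ts (i # is) \<alpha> = Option.bind (tbox i \<alpha>) (apply_ts is)"

definition hcstrip :: "nat \<Rightarrow> nat list \<Rightarrow> nat list \<Rightarrow> bool" where
  "hcstrip n \<beta> \<alpha> \<longleftrightarrow> (\<exists>is. length is = n \<and> sorted_wrt (<) is \<and> (\<forall>i\<in>set is. 1 \<le> i)
                           \<and> apply_ts is \<alpha> = Some \<beta>)"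

definition hkcstrip :: "nat \<Rightarrow> nat \<Rightarrow> nat list \<Rightarrow> nat list \<Rightarrow> bool" where
  "hkcstrip k n \<beta> \<alpha> \<longleftrightarrow> kcomp k \<alpha> \<and> kcomp k \<beta> \<and> hcstrip n \<beta> \<alpha> \<and> hkstrip k (lam \<beta>) (lam \<alpha>)"

text \<open>NSym: elements are finitely supported coefficient functions on words
  H_{w1}...H_{wm} (w a composition). Sym: finitely supported coefficient functions
  on the basis h_lambda, lambda encoded as a multiset of positive parts.\<close>

definition fin_supp :: "('a \<Rightarrow> rat) \<Rightarrow> bool" where
  "fin_supp f \<longleftrightarrow> finite {x. f x \<noteq> 0}"

definition NSym_k :: "nat \<Rightarrow> (nat list \<Rightarrow> rat) set" where
  "NSym_k k = {f. fin_supp f \<and> (\<forall>w. f w \<noteq> 0 \<longrightarrow> kcomp k w)}"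

definition Sym_k :: "nat \<Rightarrow> (nat multiset \<Rightarrow> rat) set" where
  "Sym_k k = {f. fin_supp f \<and> (\<forall>m. f m \<noteq> 0 \<longrightarrow> (\<forall>x\<in>#m. 0 < x \<and> x \<le> k))}"

definition oneNS :: "nat list \<Rightarrow> rat" where
  "oneNS w = (if w = [] then 1 else 0)"

definition oneS :: "nat multiset \<Rightarrow> rat" where
  "oneS m = (if m = {#} then 1 else 0)"

definition mulH :: "nat \<Rightarrow> (nat list \<Rightarrow> rat) \<Rightarrow> (nat list \<Rightarrow> rat)" where
  "mulH i f = (\<lambda>w. case w of [] \<Rightarrow> 0 | a # v \<Rightarrow> if a = i then f v else 0)"

definition mulh :: "nat \<Rightarrow> (nat multiset \<Rightarrow> rat) \<Rightarrow> (nat multiset \<Rightarrow> rat)" where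
  "mulh i f = (\<lambda>m. if i \<in># m then f (m - {#i#}) else 0)"

text \<open>chi: H_{a1}...H_{am} \<mapsto> h_{lambda(a)}, extended linearly\<close>
definition chi :: "(nat list \<Rightarrow> rat) \<Rightarrow> (nat multiset \<Rightarrow> rat)" where
  "chi f = (\<lambda>m. \<Sum>w\<in>{w. mset w = m}. f w)"

definition is_basis :: "('x \<Rightarrow> rat) set \<Rightarrow> 'i set \<Rightarrow> ('i \<Rightarrow> 'x \<Rightarrow> rat) \<Rightarrow> bool" where
  "is_basis V I b \<longleftrightarrow> (\<forall>i\<in>I. b i \<in> V) \<and>
     (\<forall>f\<in>V. \<exists>!c. {i. c i \<noteq> 0} \<subseteq> I \<and> finite {i. c i \<noteq> 0} \<and>
                   f = (\<Sum>i\<in>{i. c i \<noteq> 0}. (\<lambda>x. c i * b i x)))"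

end

theory Submission
  imports Defs
begin

text \<open>
  Let \<open>\<Phi>\<close> be the linear map on \<open>NSym_k k\<close> sending \<open>S \<beta>\<close> to \<open>s (lam \<beta>)\<close>; it is
  well defined because the \<open>S \<beta>\<close> form a basis. The two Pieri rules correspond term by term under \<open>lam\<close>: a strictly increasing
  sequence of box-adding operators \<open>t\<^sub>i\<^sub>1, ..., t\<^sub>i\<^sub>n\<close> adds one cell to each of the
  columns \<open>i\<^sub>1, ..., i\<^sub>n\<close> of the diagram of \<open>lam \<alpha>\<close>, and these columns determine the
  result, so \<open>lam\<close> maps the horizontal \<open>k\<close>-composition strips over \<open>\<alpha>\<close> bijectively
  onto the horizontal \<open>k\<close>-strips over \<open>lam \<alpha>\<close>. Hence \<open>\<Phi> (H\<^sub>i f) = h\<^sub>i \<Phi> f\<close>,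
  and as \<open>chi\<close> satisfies the same rule and \<open>\<Phi> 1 = 1 = chi 1\<close>, induction over words
  gives \<open>\<Phi> = chi\<close>.
\<close>

section \<open>Column lengths and box-adding operators\<close>

lemma colLen_mset: "colLen x c = size (filter_mset (\<lambda>e. c \<le> e) (mset x))"
  unfolding colLen_def by (metis mset_filter size_mset)

lemma colLen_split: "colLen x c = colLen x (Suc c) + count (mset x) c"
  unfolding colLen_def count_mset by (induction x) auto

lemma colLen_antimono: "c \<le> d \<Longrightarrow> colLen x d \<le> colLen x c"
  unfolding colLen_def by (induction x) auto

lemma mem_iff_less_card_if_downward_closed:
  fixes S :: "nat set"
  assumes "finite S" and down: "\<And>j j'. j \<in> S \<Longrightarrow> j' \<le> j \<Longrightarrow> j' \<in> S"
  shows "j \<in> S \<longleftrightarrow> j < card S"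
proof
  assume "j \<in> S"
  then have "{..j} \<subseteq> S" using down by auto
  then have "card {..j} \<le> card S" by (rule card_mono[OF \<open>finite S\<close>])
  then show "j < card S" by simp
next
  assume "j < card S"
  show "j \<in> S"
  proof (rule ccontr)
    assume "j \<notin> S"
    then have "S \<subseteq> {..<j}" using down by (meson lessThan_iff not_le_imp_less subsetI)
    then have "card S \<le> j" using card_mono[of "{..<j}" S] by simp
    then show False using \<open>j < card S\<close> by simp
  qed
qed

lemma cells_iff_colLen:
  assumes "is_partition \<kappa>" "1 \<le> r" "1 \<le> c"
  shows "(r, c) \<in> cells \<kappa> \<longleftrightarrow> r \<le> colLen \<kappa> c"
proof -
  define S where "S = {j. j < length \<kappa> \<and> c \<le> \<kappa> ! j}"
  have colLen_card: "colLen \<kappa> c = card S"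
    unfolding colLen_def S_def by (rule length_filter_conv_card)
  have sorted: "sorted_wrt (\<ge>) \<kappa>" using assms(1) by (simp add: is_partition_def)
  have "j' \<in> S" if "j \<in> S" "j' \<le> j" for j j'
    using that sorted_wrt_nth_less[OF sorted, of j' j] by (cases "j' = j") (auto simp: S_def)
  then have "r - 1 \<in> S \<longleftrightarrow> r - 1 < card S"
    by (intro mem_iff_less_card_if_downward_closed) (auto simp: S_def)
  moreover have "(r, c) \<in> cells \<kappa> \<longleftrightarrow> r - 1 \<in> S"
    using assms(2,3) by (auto simp: cells_def S_def)
  ultimately show ?thesis using colLen_card assms(2) by auto
qed

lemma mset_eq_if_colLen_eq:
  assumes "is_composition a" "is_composition b" "\<And>c. 1 \<le> c \<Longrightarrow> colLen a c = colLen b c"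
  shows "mset a = mset b"
proof (rule multiset_eqI)
  fix c
  show "count (mset a) c = count (mset b) c"
  proof (cases "c = 0")
    case True
    have "c \<notin> set a" "c \<notin> set b" using assms(1,2) True by (auto simp: is_composition_def)
    then show ?thesis by (metis count_eq_zero_iff set_mset_mset)
  next
    case False
    then show ?thesis
      using colLen_split[of a c] colLen_split[of b c] assms(3)[of c] assms(3)[of "Suc c"] by simp
  qed
qed

lemma replace_first_Some_iff: "(\<exists>y. replace_first a b x = Some y) \<longleftrightarrow> a \<in> set x"
  by (induction x) auto

lemma replace_first_mset:
  "replace_first a b x = Some y \<Longrightarrow> \<exists>M. mset x = add_mset a M \<and> mset y = add_mset b M"
proof (induction x arbitrary: y)
  case (Cons z zs)
  show ?case
  proof (cases "z = a")
    case False
    with Cons.prems obtain y' where "replace_first a b zs = Some y'" "y = z # y'" by auto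
    with Cons.IH obtain M where "mset zs = add_mset a M" "mset y' = add_mset b M" by blast
    with \<open>y = z # y'\<close> show ?thesis by (intro exI[of _ "add_mset z M"]) auto
  qed (use Cons.prems in auto)
qed simp

lemma tbox_SomeE:
  assumes "tbox j x = Some y"
  obtains "j = 1" "mset y = add_mset 1 (mset x)"
  | M where "2 \<le> j" "mset x = add_mset (j - 1) M" "mset y = add_mset j M"
  using assms replace_first_mset[of "j - 1" j x y]
  by (cases "j = 1") (auto simp: tbox_def split: if_splits)

lemma tbox_Some_iff: "(\<exists>y. tbox j x = Some y) \<longleftrightarrow> j = 1 \<or> (2 \<le> j \<and> j - 1 \<in> set x)"
  using replace_first_Some_iff[of "j - 1" j x] by (auto simp: tbox_def)

lemma colLen_tbox:
  assumes "tbox j x = Some y" "1 \<le> c"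
  shows "colLen y c = colLen x c + (if c = j then 1 else 0)"
  using assms(1) by (cases rule: tbox_SomeE) (use assms(2) in \<open>auto simp: colLen_mset\<close>)

lemma sum_list_tbox: "tbox j x = Some y \<Longrightarrow> sum_list y = Suc (sum_list x)"
  by (cases rule: tbox_SomeE) (auto simp flip: sum_mset_sum_list)

lemma is_composition_tbox: "tbox j x = Some y \<Longrightarrow> is_composition x \<Longrightarrow> is_composition y"
  unfolding is_composition_def
  by (cases rule: tbox_SomeE) (auto simp flip: set_mset_mset dest: union_single_eq_member)

lemma colLen_apply_ts:
  "apply_ts I x = Some y \<Longrightarrow> 1 \<le> c \<Longrightarrow> colLen y c = colLen x c + count (mset I) c"
proof (induction I arbitrary: x)
  case (Cons j I)
  then obtain z where "tbox j x = Some z" "apply_ts I z = Some y"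
    by (auto simp: bind_eq_Some_conv)
  then show ?case using Cons.IH colLen_tbox[of j x z c] Cons.prems(2) by auto
qed simp

lemma sum_list_apply_ts: "apply_ts I x = Some y \<Longrightarrow> sum_list y = sum_list x + length I"
proof (induction I arbitrary: x)
  case (Cons j I)
  then obtain z where "tbox j x = Some z" "apply_ts I z = Some y"
    by (auto simp: bind_eq_Some_conv)
  then show ?case using Cons.IH sum_list_tbox by fastforce
qed simp

lemma is_composition_apply_ts:
  "apply_ts I x = Some y \<Longrightarrow> is_composition x \<Longrightarrow> is_composition y"
proof (induction I arbitrary: x)
  case (Cons j I)
  then obtain z where "tbox j x = Some z" "apply_ts I z = Some y"
    by (auto simp: bind_eq_Some_conv)
  then show ?case using Cons is_composition_tbox by blast
qed simp

text \<open>Applying \<open>t\<^sub>j\<close> needs a part \<open>j - 1\<close>; it exists because column \<open>j\<close>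
  grows while column \<open>j - 1\<close> does not (the indices increase), and the target column lengths
  \<open>T\<close> are antitone.\<close>
lemma apply_ts_exists:
  assumes "sorted_wrt (<) I" "\<forall>j\<in>set I. 1 \<le> j"
    and "\<And>c. 1 \<le> c \<Longrightarrow> T c = colLen x c + (if c \<in> set I then 1 else 0)"
    and "\<And>c d. 1 \<le> c \<Longrightarrow> c \<le> d \<Longrightarrow> T d \<le> T c"
  shows "\<exists>y. apply_ts I x = Some y \<and> (\<forall>c\<ge>1. colLen y c = T c)"
  using assms
proof (induction I arbitrary: x)
  case (Cons j I)
  have "1 \<le> j" and "j \<notin> set I" and later: "\<forall>i\<in>set I. j < i"
    using Cons.prems(1,2) by auto
  have "\<exists>z. tbox j x = Some z"
  proof (cases "j = 1")
    case False
    then have "2 \<le> j" using \<open>1 \<le> j\<close> by simp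
    then have "T (j - 1) = colLen x (j - 1)" "T j = colLen x j + 1" "T j \<le> T (j - 1)"
      using Cons.prems(3)[of "j - 1"] Cons.prems(3)[of j] Cons.prems(4)[of "j - 1" j] later
      by auto
    then have "count (mset x) (j - 1) \<noteq> 0" using colLen_split[of x "j - 1"] \<open>2 \<le> j\<close> by simp
    then show ?thesis using \<open>2 \<le> j\<close> by (simp add: tbox_Some_iff)
  qed (simp add: tbox_Some_iff)
  then obtain z where z: "tbox j x = Some z" ..
  have "T c = colLen z c + (if c \<in> set I then 1 else 0)" if "1 \<le> c" for c
    using Cons.prems(3)[OF that] colLen_tbox[OF z that] \<open>j \<notin> set I\<close> by auto
  then obtain y where "apply_ts I z = Some y" "\<forall>c\<ge>1. colLen y c = T c"
    using Cons.IH[of z] Cons.prems(1,2,4) by auto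
  then show ?case using z by auto
qed simp

section \<open>Horizontal composition strips and horizontal \<open>k\<close>-strips\<close>

lemma mset_lam [simp]: "mset (lam x) = mset x"
  by (simp add: lam_def)

lemma sum_list_lam [simp]: "sum_list (lam x) = sum_list x"
  by (metis mset_lam sum_mset_sum_list)

lemma colLen_lam [simp]: "colLen (lam x) c = colLen x c"
  by (simp add: colLen_mset)

lemma kpart_lam: "kcomp k x \<Longrightarrow> kpart k (lam x)"
  by (auto simp: kcomp_def kpart_def is_partition_def lam_def sorted_wrt_rev)

lemma lam_eq_if_mset_eq:
  assumes "is_partition mu" "mset x = mset mu"
  shows "lam x = mu"
proof -
  have "sort x = rev mu"
    using assms by (intro properties_for_sort) (auto simp: is_partition_def sorted_wrt_rev)
  then show ?thesis by (simp add: lam_def)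
qed

lemma hkstrip_lam_if_hkcstrip:
  assumes "hkcstrip k i b g"
  shows "hkstrip k (lam b) (lam g) \<and> sum_list (lam b) - sum_list (lam g) = i"
proof -
  obtain I where "length I = i" "apply_ts I g = Some b"
    using assms by (auto simp: hkcstrip_def hcstrip_def)
  then show ?thesis using sum_list_apply_ts assms by (auto simp: hkcstrip_def)
qed

text \<open>The column lengths of the result determine the multiset of indices used, and a strictly
  increasing index list is determined by its multiset.\<close>
lemma inj_on_lam_hkcstrip: "inj_on lam {b. hkcstrip k i b g}"
proof (rule inj_onI)
  fix b b' assume "b \<in> {b. hkcstrip k i b g}" "b' \<in> {b. hkcstrip k i b g}" "lam b = lam b'"
  then obtain I I' where
    I: "sorted_wrt (<) I" "\<forall>j\<in>set I. 1 \<le> j" "apply_ts I g = Some b" and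
    I': "sorted_wrt (<) I'" "\<forall>j\<in>set I'. 1 \<le> j" "apply_ts I' g = Some b'"
    by (auto simp: hkcstrip_def hcstrip_def)
  have cols: "colLen b c = colLen b' c" for c
    using colLen_lam[of b c] colLen_lam[of b' c] \<open>lam b = lam b'\<close> by simp
  have "count (mset I) c = count (mset I') c" for c
  proof (cases "1 \<le> c")
    case True
    then show ?thesis using colLen_apply_ts[OF I(3)] colLen_apply_ts[OF I'(3)] cols[of c] by auto
  next
    case False
    then have "c \<notin> set I" "c \<notin> set I'" using I(2) I'(2) by auto
    then show ?thesis by (metis count_eq_zero_iff set_mset_mset)
  qed
  then have "mset I = mset I'" by (rule multiset_eqI)
  then have "I = I'"
    by (metis I(1) I'(1) properties_for_sort strict_sorted_imp_sorted)
  then show "b = b'" using I(3) I'(3) by simp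
qed

lemma colLen_horizontal_strip:
  assumes "is_partition mu" "is_partition la" "cells la \<subseteq> cells mu"
    and one_per_column: "\<forall>x\<in>cells mu - cells la. \<forall>y\<in>cells mu - cells la. snd x = snd y \<longrightarrow> x = y"
    and "1 \<le> c"
  shows "colLen la c \<le> colLen mu c" "colLen mu c \<le> Suc (colLen la c)"
proof -
  note cells_mu = cells_iff_colLen[OF assms(1) _ \<open>1 \<le> c\<close>]
  note cells_la = cells_iff_colLen[OF assms(2) _ \<open>1 \<le> c\<close>]
  show "colLen la c \<le> colLen mu c"
  proof (cases "colLen la c = 0")
    case False
    then have "(colLen la c, c) \<in> cells mu" using cells_la assms(3) by auto
    then show ?thesis using cells_mu False by simp
  qed simp
  show "colLen mu c \<le> Suc (colLen la c)"
  proof (rule ccontr)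
    assume "\<not> ?thesis"
    then have "(colLen la c + 1, c) \<in> cells mu - cells la" "(colLen la c + 2, c) \<in> cells mu - cells la"
      using cells_mu cells_la by auto
    then have "(colLen la c + 1, c) = (colLen la c + 2, c)" using one_per_column by (metis snd_conv)
    then show False by simp
  qed
qed

lemma hkcstrip_if_hkstrip_lam:
  assumes g: "kcomp k g" and mu: "hkstrip k mu (lam g)" "sum_list mu - sum_list (lam g) = i"
  shows "\<exists>b. hkcstrip k i b g \<and> lam b = mu"
proof -
  have kp: "kpart k mu" "kpart k (lam g)"
    and strip: "cells (lam g) \<subseteq> cells mu"
      "\<forall>x\<in>cells mu - cells (lam g). \<forall>y\<in>cells mu - cells (lam g). snd x = snd y \<longrightarrow> x = y"
    using mu(1) by (auto simp: hkstrip_def)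
  then have pm: "is_partition mu" and pg: "is_partition (lam g)" by (auto simp: kpart_def)
  note cols = colLen_horizontal_strip[OF pm pg strip, unfolded colLen_lam]
  define I where "I = sorted_list_of_set {c. 1 \<le> c \<and> c \<le> k \<and> colLen mu c = Suc (colLen g c)}"
  have setI: "set I = {c. 1 \<le> c \<and> c \<le> k \<and> colLen mu c = Suc (colLen g c)}"
    by (simp add: I_def)
  have sI: "sorted_wrt (<) I" by (simp add: I_def strict_sorted_list_of_set)
  have I1: "\<forall>j\<in>set I. 1 \<le> j" using setI by auto
  have big: "colLen mu c = 0" if "k < c" for c
    using kp(1) that unfolding kpart_def colLen_def by (auto simp: filter_empty_conv)
  have "colLen mu c = colLen g c + (if c \<in> set I then 1 else 0)" if "1 \<le> c" for c
    using that cols[OF that] big[of c] unfolding setI by (cases "k < c") auto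
  then obtain b where b: "apply_ts I g = Some b" "\<forall>c\<ge>1. colLen b c = colLen mu c"
    using apply_ts_exists[OF sI I1, of "colLen mu"] colLen_antimono by blast
  have "is_composition b"
    using is_composition_apply_ts[OF b(1)] g by (simp add: kcomp_def is_composition_def)
  moreover have "is_composition mu" using pm by (simp add: is_partition_def is_composition_def)
  ultimately have ms: "mset b = mset mu" using b(2) by (intro mset_eq_if_colLen_eq) auto
  then have "lam b = mu" using pm by (rule lam_eq_if_mset_eq[rotated])
  moreover have "kcomp k b" using kp(1) ms
    by (auto simp: kcomp_def kpart_def is_partition_def simp flip: set_mset_mset)
  moreover have "length I = i"
    using sum_list_apply_ts[OF b(1)] mu(2) ms by (metis sum_list_lam mset_lam sum_mset_sum_list diff_add_inverse)
  ultimately show ?thesis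
    using g mu(1) sI I1 b(1) by (auto simp: hkcstrip_def hcstrip_def)
qed

lemma lam_image_hkcstrip:
  assumes "kcomp k g"
  shows "lam ` {b. hkcstrip k i b g} =
    {mu. hkstrip k mu (lam g) \<and> sum_list mu - sum_list (lam g) = i}"
  using hkstrip_lam_if_hkcstrip hkcstrip_if_hkstrip_lam[OF assms] by fastforce

section \<open>Common expansions in two families\<close>

lemma sum_fun_apply: "(\<Sum>i\<in>A. F i) x = (\<Sum>i\<in>A. F i x)"
  by (induction A rule: infinite_finite_induct) auto

definition common_expansion ::
  "'i set \<Rightarrow> ('i \<Rightarrow> 'x \<Rightarrow> 'r::comm_semiring_1) \<Rightarrow> ('i \<Rightarrow> 'y \<Rightarrow> 'r) \<Rightarrow> ('x \<Rightarrow> 'r) \<Rightarrow> ('y \<Rightarrow> 'r) \<Rightarrow> bool"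
  where "common_expansion I b b' f g \<longleftrightarrow> (\<exists>a. {i. a i \<noteq> 0} \<subseteq> I \<and> finite {i. a i \<noteq> 0} \<and>
    f = (\<Sum>i | a i \<noteq> 0. (\<lambda>x. a i * b i x)) \<and> g = (\<Sum>i | a i \<noteq> 0. (\<lambda>y. a i * b' i y)))"

lemma common_expansion_zero: "common_expansion I b b' 0 0"
  unfolding common_expansion_def by (rule exI[of _ "\<lambda>_. 0"]) auto

lemma common_expansion_basis: "i \<in> I \<Longrightarrow> common_expansion I b b' (b i) (b' i)"
  unfolding common_expansion_def
  by (rule exI[of _ "\<lambda>j. if j = i then 1 else 0"]) (auto simp: if_distrib cong: if_cong)

lemma common_expansion_scale:
  fixes b :: "'i \<Rightarrow> 'x \<Rightarrow> 'r::comm_semiring_1"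
  assumes "common_expansion I b b' f g"
  shows "common_expansion I b b' (\<lambda>x. c * f x) (\<lambda>y. c * g y)"
proof -
  obtain a where a: "{i. a i \<noteq> 0} \<subseteq> I" "finite {i. a i \<noteq> 0}"
    "f = (\<Sum>i | a i \<noteq> 0. (\<lambda>x. a i * b i x))" "g = (\<Sum>i | a i \<noteq> 0. (\<lambda>y. a i * b' i y))"
    using assms unfolding common_expansion_def by blast
  define a' where "a' i = c * a i" for i
  have supp: "{i. a' i \<noteq> 0} \<subseteq> {i. a i \<noteq> 0}" by (auto simp: a'_def)
  have "(\<Sum>i | a' i \<noteq> 0. a' i * F i) = c * (\<Sum>i | a i \<noteq> 0. a i * F i)" for F :: "_ \<Rightarrow> 'r"
    by (subst sum.mono_neutral_left[OF a(2) supp]) (auto simp: a'_def sum_distrib_left mult.assoc)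
  then show ?thesis
    unfolding common_expansion_def using a supp finite_subset[OF supp a(2)]
    by (intro exI[of _ a']) (auto simp: sum_fun_apply)
qed

lemma common_expansion_add:
  fixes b :: "'i \<Rightarrow> 'x \<Rightarrow> 'r::comm_semiring_1"
  assumes "common_expansion I b b' f g" "common_expansion I b b' f' g'"
  shows "common_expansion I b b' (f + f') (g + g')"
proof -
  obtain a where a: "{i. a i \<noteq> 0} \<subseteq> I" "finite {i. a i \<noteq> 0}"
    "f = (\<Sum>i | a i \<noteq> 0. (\<lambda>x. a i * b i x))" "g = (\<Sum>i | a i \<noteq> 0. (\<lambda>y. a i * b' i y))"
    using assms(1) unfolding common_expansion_def by blast
  obtain a' where a': "{i. a' i \<noteq> 0} \<subseteq> I" "finite {i. a' i \<noteq> 0}"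
    "f' = (\<Sum>i | a' i \<noteq> 0. (\<lambda>x. a' i * b i x))" "g' = (\<Sum>i | a' i \<noteq> 0. (\<lambda>y. a' i * b' i y))"
    using assms(2) unfolding common_expansion_def by blast
  define U where "U = {i. a i \<noteq> 0} \<union> {i. a' i \<noteq> 0}"
  define a'' where "a'' i = a i + a' i" for i
  have U: "finite U" "{i. a i \<noteq> 0} \<subseteq> U" "{i. a' i \<noteq> 0} \<subseteq> U" "{i. a'' i \<noteq> 0} \<subseteq> U"
    using a(2) a'(2) by (auto simp: U_def a''_def)
  have on_U: "(\<Sum>i | c i \<noteq> 0. c i * F i) = (\<Sum>i\<in>U. c i * F i)"
    if "{i. c i \<noteq> 0} \<subseteq> U" for c and F :: "_ \<Rightarrow> 'r"
    using that by (intro sum.mono_neutral_left U(1)) auto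
  have "(\<Sum>i | a i \<noteq> 0. a i * F i) + (\<Sum>i | a' i \<noteq> 0. a' i * F i) = (\<Sum>i | a'' i \<noteq> 0. a'' i * F i)"
    for F :: "_ \<Rightarrow> 'r"
    unfolding on_U[OF U(2)] on_U[OF U(3)] on_U[OF U(4)]
    by (simp add: a''_def distrib_right sum.distrib)
  then show ?thesis
    unfolding common_expansion_def using a a' U finite_subset[OF U(4)]
    by (intro exI[of _ a'']) (auto simp: sum_fun_apply U_def)
qed

lemma common_expansion_sum:
  "(\<And>j. j \<in> A \<Longrightarrow> common_expansion I b b' (F j) (G j)) \<Longrightarrow>
    common_expansion I b b' (\<Sum>j\<in>A. F j) (\<Sum>j\<in>A. G j)"
  by (induction A rule: infinite_finite_induct) (auto intro: common_expansion_zero common_expansion_add)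

lemma common_expansion_lincomb:
  "(\<And>j. j \<in> A \<Longrightarrow> common_expansion I b b' (F j) (G j)) \<Longrightarrow>
    common_expansion I b b' (\<Sum>j\<in>A. (\<lambda>x. c j * F j x)) (\<Sum>j\<in>A. (\<lambda>y. c j * G j y))"
  by (intro common_expansion_sum common_expansion_scale)

lemma common_expansion_basis_unique:
  fixes b :: "'i \<Rightarrow> 'x \<Rightarrow> rat"
  assumes "is_basis V I b" "i \<in> I" and exp: "common_expansion I b b' (b i) g"
  shows "g = b' i"
proof -
  obtain a where a: "{j. a j \<noteq> 0} \<subseteq> I" "finite {j. a j \<noteq> 0}"
    "b i = (\<Sum>j | a j \<noteq> 0. (\<lambda>x. a j * b j x))" "g = (\<Sum>j | a j \<noteq> 0. (\<lambda>y. a j * b' j y))"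
    using exp unfolding common_expansion_def by blast
  define d where "d j = (if j = i then 1 else 0 :: rat)" for j
  have supp_d: "{j. d j \<noteq> 0} = {i}" by (auto simp: d_def)
  have "b i \<in> V" using assms(1,2) by (simp add: is_basis_def)
  then have "\<exists>!c. {j. c j \<noteq> 0} \<subseteq> I \<and> finite {j. c j \<noteq> 0} \<and>
      b i = (\<Sum>j | c j \<noteq> 0. (\<lambda>x. c j * b j x))"
    using assms(1) unfolding is_basis_def by blast
  moreover have "{j. d j \<noteq> 0} \<subseteq> I \<and> finite {j. d j \<noteq> 0} \<and>
      b i = (\<Sum>j | d j \<noteq> 0. (\<lambda>x. d j * b j x))"
    using assms(2) by (simp add: supp_d d_def)
  ultimately have "a = d" using a by blast
  then show ?thesis using a(4) by (simp add: supp_d d_def)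
qed

section \<open>The map \<open>\<Phi>\<close> agrees with \<open>chi\<close>\<close>

lemma chi_lincomb:
  "chi (\<Sum>j\<in>A. (\<lambda>x. c j * F j x)) = (\<Sum>j\<in>A. (\<lambda>m. c j * chi (F j) m))"
proof
  fix m
  show "chi (\<Sum>j\<in>A. (\<lambda>x. c j * F j x)) m = (\<Sum>j\<in>A. (\<lambda>m. c j * chi (F j) m)) m"
    unfolding chi_def sum_fun_apply sum_distrib_left by (rule sum.swap)
qed

lemma mulH_lincomb:
  "mulH i (\<Sum>j\<in>A. (\<lambda>x. c j * F j x)) = (\<Sum>j\<in>A. (\<lambda>w. c j * mulH i (F j) w))"
  by (rule ext) (simp add: mulH_def sum_fun_apply split: list.split)

lemma mulh_lincomb:
  "mulh i (\<Sum>j\<in>A. (\<lambda>x. c j * F j x)) = (\<Sum>j\<in>A. (\<lambda>m. c j * mulh i (F j) m))"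
  by (rule ext) (simp add: mulh_def sum_fun_apply)

lemma finite_mset_preimage: "finite {w. mset w = m}"
  by (metis ex_mset mset_eq_finite)

lemma chi_mulH: "chi (mulH i f) = mulh i (chi f)"
proof
  fix m
  show "chi (mulH i f) m = mulh i (chi f) m"
  proof (cases "i \<in># m")
    case False
    then have "mulH i f w = 0" if "mset w = m" for w
      using that by (cases w) (auto simp: mulH_def)
    then show ?thesis using False by (simp add: chi_def mulh_def)
  next
    case True
    let ?T = "(#) i ` {v. mset v = m - {#i#}}"
    have "?T \<subseteq> {w. mset w = m}" using True by auto
    moreover have "mulH i f w = 0" if "mset w = m" "w \<notin> ?T" for w
      using that by (cases w) (auto simp: mulH_def)
    ultimately have "chi (mulH i f) m = (\<Sum>w\<in>?T. mulH i f w)"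
      unfolding chi_def by (intro sum.mono_neutral_right finite_mset_preimage) auto
    also have "\<dots> = (\<Sum>v | mset v = m - {#i#}. f v)"
      by (subst sum.reindex) (auto simp: mulH_def)
    finally show ?thesis using True by (simp add: chi_def mulh_def)
  qed
qed

lemma chi_oneNS: "chi oneNS = oneS"
proof
  fix m
  show "chi oneNS m = oneS m"
  proof (cases "m = {#}")
    case True
    then have "{w. mset w = m} = {[]}" by auto
    then show ?thesis using True by (simp add: chi_def oneNS_def oneS_def)
  qed (auto simp: chi_def oneNS_def oneS_def intro!: sum.neutral)
qed

definition H_word :: "nat list \<Rightarrow> nat list \<Rightarrow> rat" where
  "H_word w = (\<lambda>v. if v = w then 1 else 0)"

lemma H_word_Nil: "H_word [] = oneNS"
  by (auto simp: H_word_def oneNS_def)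

lemma H_word_Cons: "H_word (j # w) = mulH j (H_word w)"
  by (auto simp: H_word_def mulH_def split: list.split)

lemma H_word_expansion: "fin_supp f \<Longrightarrow> f = (\<Sum>w | f w \<noteq> 0. (\<lambda>v. f w * H_word w v))"
  by (rule ext) (simp add: fin_supp_def sum_fun_apply H_word_def if_distrib sum.delta' cong: if_cong)

locale pieri_bases =
  fixes k :: nat
    and S :: "nat list \<Rightarrow> nat list \<Rightarrow> rat"
    and s :: "nat list \<Rightarrow> nat multiset \<Rightarrow> rat"
  assumes S_empty: "S [] = oneNS"
    and S_pieri: "\<And>\<gamma> i. kcomp k \<gamma> \<Longrightarrow> i \<in> {1..k} \<Longrightarrow>
      mulH i (S \<gamma>) = (\<Sum>\<beta>\<in>{\<beta>. hkcstrip k i \<beta> \<gamma>}. S \<beta>)"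
    and s_empty: "s [] = oneS"
    and s_pieri: "\<And>la i. kpart k la \<Longrightarrow> i \<in> {1..k} \<Longrightarrow>
      mulh i (s la) = (\<Sum>\<mu>\<in>{\<mu>. hkstrip k \<mu> la \<and> sum_list \<mu> - sum_list la = i}. s \<mu>)"
begin

text \<open>\<open>Phi_graph f g\<close> means \<open>g = \<Phi> f\<close> for the map \<open>\<Phi> (S \<beta>) = s (lam \<beta>)\<close>.\<close>
abbreviation Phi_graph :: "(nat list \<Rightarrow> rat) \<Rightarrow> (nat multiset \<Rightarrow> rat) \<Rightarrow> bool" where
  "Phi_graph \<equiv> common_expansion {\<beta>. kcomp k \<beta>} S (\<lambda>\<beta>. s (lam \<beta>))"

lemma mulh_s_lam:
  assumes "kcomp k \<gamma>" "i \<in> {1..k}"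
  shows "mulh i (s (lam \<gamma>)) = (\<Sum>\<beta>\<in>{\<beta>. hkcstrip k i \<beta> \<gamma>}. s (lam \<beta>))"
proof -
  have "mulh i (s (lam \<gamma>)) = (\<Sum>\<mu>\<in>lam ` {\<beta>. hkcstrip k i \<beta> \<gamma>}. s \<mu>)"
    using s_pieri[OF kpart_lam[OF assms(1)] assms(2)] by (simp add: lam_image_hkcstrip[OF assms(1)])
  also have "\<dots> = (\<Sum>\<beta>\<in>{\<beta>. hkcstrip k i \<beta> \<gamma>}. s (lam \<beta>))"
    by (simp add: sum.reindex[OF inj_on_lam_hkcstrip])
  finally show ?thesis .
qed

lemma Phi_graph_mulH_basis:
  assumes "kcomp k \<gamma>" "i \<in> {1..k}"
  shows "Phi_graph (mulH i (S \<gamma>)) (mulh i (s (lam \<gamma>)))"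
  unfolding S_pieri[OF assms] mulh_s_lam[OF assms]
  by (intro common_expansion_sum common_expansion_basis) (simp add: hkcstrip_def)

lemma Phi_graph_mulH:
  assumes "Phi_graph f (chi f)" "i \<in> {1..k}"
  shows "Phi_graph (mulH i f) (chi (mulH i f))"
proof -
  obtain a where a: "{\<beta>. a \<beta> \<noteq> 0} \<subseteq> {\<beta>. kcomp k \<beta>}"
    "f = (\<Sum>\<beta> | a \<beta> \<noteq> 0. (\<lambda>x. a \<beta> * S \<beta> x))" "chi f = (\<Sum>\<beta> | a \<beta> \<noteq> 0. (\<lambda>y. a \<beta> * s (lam \<beta>) y))"
    using assms(1) unfolding common_expansion_def by blast
  have "mulH i f = (\<Sum>\<beta> | a \<beta> \<noteq> 0. (\<lambda>x. a \<beta> * mulH i (S \<beta>) x))"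
    by (subst a(2)) (rule mulH_lincomb)
  moreover have "chi (mulH i f) = (\<Sum>\<beta> | a \<beta> \<noteq> 0. (\<lambda>y. a \<beta> * mulh i (s (lam \<beta>)) y))"
    unfolding chi_mulH by (subst a(3)) (rule mulh_lincomb)
  ultimately show ?thesis
    using a(1) assms(2) by (auto intro!: common_expansion_lincomb Phi_graph_mulH_basis)
qed

lemma Phi_graph_H_word: "kcomp k w \<Longrightarrow> Phi_graph (H_word w) (chi (H_word w))"
proof (induction w)
  case Nil
  have "Phi_graph (S []) (s (lam []))" by (intro common_expansion_basis) (simp add: kcomp_def)
  then show ?case by (simp add: H_word_Nil S_empty s_empty chi_oneNS lam_def)
next
  case (Cons j w)
  then have "j \<in> {1..k}" "kcomp k w" by (auto simp: kcomp_def)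
  then show ?case using Cons.IH by (simp add: H_word_Cons Phi_graph_mulH)
qed

lemma Phi_graph_chi:
  assumes "f \<in> NSym_k k"
  shows "Phi_graph f (chi f)"
proof -
  have "f = (\<Sum>w | f w \<noteq> 0. (\<lambda>v. f w * H_word w v))"
    using assms by (simp add: NSym_k_def H_word_expansion)
  moreover have "Phi_graph (\<Sum>w | f w \<noteq> 0. (\<lambda>v. f w * H_word w v))
      (\<Sum>w | f w \<noteq> 0. (\<lambda>m. f w * chi (H_word w) m))"
    using assms by (intro common_expansion_lincomb Phi_graph_H_word) (simp add: NSym_k_def)
  ultimately show ?thesis by (metis chi_lincomb)
qed

end


theorem mainTheorem7:
  fixes k :: nat
    and S :: "nat list \<Rightarrow> (nat list \<Rightarrow> rat)"
    and s :: "nat list \<Rightarrow> (nat multiset \<Rightarrow> rat)"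
    and \<alpha> :: "nat list"
  assumes "1 \<le> k"
    and S_basis: "is_basis (NSym_k k) {\<beta>. kcomp k \<beta>} S"
    and S_empty: "S [] = oneNS"
    and S_pieri: "\<forall>\<gamma>. kcomp k \<gamma> \<longrightarrow> (\<forall>i\<in>{1..k}.
                    mulH i (S \<gamma>) = (\<Sum>\<beta>\<in>{\<beta>. hkcstrip k i \<beta> \<gamma>}. S \<beta>))"
    and s_basis: "is_basis (Sym_k k) {la. kpart k la} s"
    and s_empty: "s [] = oneS"
    and s_pieri: "\<forall>la. kpart k la \<longrightarrow> (\<forall>i\<in>{1..k}.
                    mulh i (s la) = (\<Sum>\<mu>\<in>{\<mu>. hkstrip k \<mu> la \<and> sum_list \<mu> - sum_list la = i}. s \<mu>))"
    and "kcomp k \<alpha>"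
  shows "chi (S \<alpha>) = s (lam \<alpha>)"
proof -
  interpret pieri_bases k S s
    using S_empty S_pieri s_empty s_pieri by unfold_locales auto
  have "S \<alpha> \<in> NSym_k k"
    using S_basis \<open>kcomp k \<alpha>\<close> by (simp add: is_basis_def)
  then have "Phi_graph (S \<alpha>) (chi (S \<alpha>))" by (rule Phi_graph_chi)
  then show ?thesis
    using S_basis \<open>kcomp k \<alpha>\<close> by (intro common_expansion_basis_unique) auto
qed

end
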